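(* Let $G=(V,E)$ be a finite, undirected, connected graph with $V=\{1,\dots,n\}$ and $n\ge 3$. Then there exists a symmetric real $n\times n$ matrix $A=(a_{ij})$ such that: (1) $A$ is positive definite; (2) $a_{ij}\neq 0$ for all $i,j$; (3) for every $i$, $|a_{ii}|<\sum_{j\neq i}|a_{ij}|$; (4) $A_G$ is positive definite; (5) $A_G$ is not strictly diagonally dominant.
   Context: For a symmetric $n\times n$ real matrix $A=(a_{ij})$, $A_G$ is defined by $(A_G)_{ij}=a_{ij}$ if $i=j$ or $(i,j)\in E$, and $(A_G)_{ij}=0$ otherwise. A matrix $M=(m_{ij})$ is strictly diagonally dominant if $|m_{ii}|>\sum_{j\neq i}|m_{ij}|$ for every $i$. *)

theory Defs
  imports "HOL-Analysis.Analysis"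
begin

definition positive_definite :: "real^'n^'n \<Rightarrow> bool" where
  "positive_definite A \<longleftrightarrow> transpose A = A \<and> (\<forall>x. x \<noteq> 0 \<longrightarrow> x \<bullet> (A *v x) > 0)"

definition graph_part :: "('n \<Rightarrow> 'n \<Rightarrow> bool) \<Rightarrow> real^'n^'n \<Rightarrow> real^'n^'n" where
  "graph_part E A = (\<chi> i j. if i = j \<or> E i j then A $ i $ j else 0)"

definition strictly_diag_dominant :: "real^'n^'n \<Rightarrow> bool" where
  "strictly_diag_dominant M \<longleftrightarrow> (\<forall>i. \<bar>M $ i $ i\<bar> > (\<Sum>j\<in>UNIV - {i}. \<bar>M $ i $ j\<bar>))"

definition undirected_graph :: "('n \<Rightarrow> 'n \<Rightarrow> bool) \<Rightarrow> bool" where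
  "undirected_graph E \<longleftrightarrow> (\<forall>u v. E u v \<longrightarrow> E v u)"

definition graph_connected :: "('n \<Rightarrow> 'n \<Rightarrow> bool) \<Rightarrow> bool" where
  "graph_connected E \<longleftrightarrow> (\<forall>u v. E\<^sup>*\<^sup>* u v)"

end

theory Submission
  imports Defs
begin

text \<open>For weights c and d > 0, the matrix J + d I + sum over i < j of w_ij w_ij^T, with
  w_ij = c_ij e_i + c_ji e_j, has positive entries and is positive definite. If all weights at
  non-edges equal 1, its graph part has the same shape except that each term
  (e_i + e_j)(e_i + e_j)^T at a non-edge becomes (e_i - e_j)(e_i - e_j)^T, so it stays positive
  definite. A connected graph on at least three vertices has a vertex v with two neighbours;
  suitable large weights on the edges at v make every row of the matrix fail diagonal dominance,
  while in the graph part the row of v loses only the small non-edge entries and its weights to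
  the neighbours outweigh the diagonal.\<close>

lemma inner_mult_vec_eq_double_sum:
  fixes M :: "real^'n^'n"
  shows "x \<bullet> (M *v x) = (\<Sum>i\<in>UNIV. \<Sum>j\<in>UNIV. x$i * M$i$j * x$j)"
  by (simp add: inner_vec_def matrix_vector_mult_def sum_distrib_left mult.assoc mult.commute mult.left_commute)

text \<open>The matrix J + d I + sum over i < j of w_ij w_ij^T, with w_ij = c_ij e_i + c_ji e_j.\<close>
definition pair_sum_matrix :: "('n::finite \<Rightarrow> 'n \<Rightarrow> real) \<Rightarrow> real \<Rightarrow> real^'n^'n" where
  "pair_sum_matrix c d =
     (\<chi> i j. 1 + (if i = j then d + (\<Sum>k\<in>UNIV - {i}. (c i k)^2) else c i j * c j i))"

lemma sum_remove_eq_sum_if: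
  "(\<Sum>j\<in>UNIV - {i}. f j) = (\<Sum>j\<in>UNIV. if j = i then 0 else f j)" for f :: "'n::finite \<Rightarrow> real"
  by (simp add: sum.If_cases Diff_eq)

lemma transpose_pair_sum_matrix: "transpose (pair_sum_matrix c d) = pair_sum_matrix c d"
  unfolding pair_sum_matrix_def transpose_def by (simp add: vec_eq_iff mult.commute)

lemma transpose_graph_part:
  assumes "undirected_graph E" "transpose A = A"
  shows "transpose (graph_part E A) = graph_part E A"
  using assms unfolding undirected_graph_def graph_part_def transpose_def
  by (auto simp: vec_eq_iff)

lemma quadratic_form_pair_sum_matrix:
  fixes x :: "real^'n::finite"
  shows "x \<bullet> (pair_sum_matrix c d *v x) = (\<Sum>i\<in>UNIV. x$i)^2 + d * (x \<bullet> x)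
     + (1/2) * (\<Sum>i\<in>UNIV. \<Sum>j\<in>UNIV. if j = i then 0 else (c i j * x$i + c j i * x$j)^2)"
proof -
  define S where "S i = (\<Sum>k\<in>UNIV - {i}. (c i k)^2)" for i
  have entry: "x$i * (pair_sum_matrix c d)$i$j * x$j = x$i * x$j
       + (if i = j then x$i * x$j * (d + S i) else 0)
       + (if j = i then 0 else c i j * c j i * x$i * x$j)" for i j
    unfolding pair_sum_matrix_def S_def by (auto simp: algebra_simps)
  have ones: "(\<Sum>i\<in>UNIV. \<Sum>j\<in>UNIV. x$i * x$j) = (\<Sum>i\<in>UNIV. x$i)^2"
    by (simp add: power2_eq_square sum_product)
  have diag: "(\<Sum>i\<in>UNIV. \<Sum>j\<in>UNIV. if i = j then x$i * x$j * (d + S i) else 0)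
      = d * (x \<bullet> x) + (\<Sum>i\<in>UNIV. \<Sum>j\<in>UNIV. if j = i then 0 else (c i j)^2 * (x$i)^2)"
    by (simp add: S_def sum_remove_eq_sum_if inner_vec_def sum_distrib_left sum_distrib_right
        sum.distrib[symmetric] algebra_simps power2_eq_square if_distrib cong: if_cong)
  have squares: "(\<Sum>i\<in>UNIV. \<Sum>j\<in>UNIV. if j = i then 0 else (c i j * x$i + c j i * x$j)^2)
     = (\<Sum>i\<in>UNIV. \<Sum>j\<in>UNIV. if j = i then 0 else (c i j)^2 * (x$i)^2)
     + (\<Sum>i\<in>UNIV. \<Sum>j\<in>UNIV. if j = i then 0 else (c j i)^2 * (x$j)^2)
     + 2 * (\<Sum>i\<in>UNIV. \<Sum>j\<in>UNIV. if j = i then 0 else c i j * c j i * x$i * x$j)"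
    by (simp add: sum_distrib_left sum.distrib[symmetric] algebra_simps power2_eq_square if_distrib
        cong: if_cong)
  have swap: "(\<Sum>i\<in>UNIV. \<Sum>j\<in>UNIV. if j = i then 0 else (c j i)^2 * (x$j)^2)
     = (\<Sum>i\<in>UNIV. \<Sum>j\<in>UNIV. if j = i then 0 else (c i j)^2 * (x$i)^2)"
    by (subst sum.swap) (simp add: eq_commute)
  show ?thesis
    unfolding inner_mult_vec_eq_double_sum entry using ones diag squares swap
    by (simp add: sum.distrib)
qed

text \<open>Zeroing the entries 2 at a non-edge with weights 1 turns the square (x_i + x_j)^2 into (x_i - x_j)^2.\<close>
lemma quadratic_form_graph_part_pair_sum_matrix:
  fixes x :: "real^'n::finite" and E :: "'n \<Rightarrow> 'n \<Rightarrow> bool"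
  assumes non_edge: "\<And>i j. i \<noteq> j \<Longrightarrow> \<not> E i j \<Longrightarrow> c i j = 1 \<and> c j i = 1"
  shows "x \<bullet> (graph_part E (pair_sum_matrix c d) *v x) = (\<Sum>i\<in>UNIV. x$i)^2 + d * (x \<bullet> x)
     + (1/2) * (\<Sum>i\<in>UNIV. \<Sum>j\<in>UNIV. if j = i then 0
                 else if E i j then (c i j * x$i + c j i * x$j)^2 else (x$i - x$j)^2)"
proof -
  define D where "D i j = (if i \<noteq> j \<and> \<not> E i j then 2 * x$i * x$j else 0)" for i j
  have entry: "x$i * (graph_part E (pair_sum_matrix c d))$i$j * x$j
      = x$i * (pair_sum_matrix c d)$i$j * x$j - D i j" for i j
    using non_edge[of i j] unfolding graph_part_def pair_sum_matrix_def D_def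
    by (auto simp: algebra_simps)
  have square: "(if j = i then 0 else if E i j then (c i j * x$i + c j i * x$j)^2 else (x$i - x$j)^2)
     = (if j = i then 0 else (c i j * x$i + c j i * x$j)^2) - 2 * D i j" for i j
    using non_edge[of i j] unfolding D_def by (auto simp: algebra_simps power2_eq_square)
  have "x \<bullet> (graph_part E (pair_sum_matrix c d) *v x)
      = x \<bullet> (pair_sum_matrix c d *v x) - (\<Sum>i\<in>UNIV. \<Sum>j\<in>UNIV. D i j)"
    unfolding inner_mult_vec_eq_double_sum entry by (simp add: sum_subtractf)
  moreover have "(\<Sum>i\<in>UNIV. \<Sum>j\<in>UNIV. if j = i then 0
                 else if E i j then (c i j * x$i + c j i * x$j)^2 else (x$i - x$j)^2)
     = (\<Sum>i\<in>UNIV. \<Sum>j\<in>UNIV. if j = i then 0 else (c i j * x$i + c j i * x$j)^2)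
       - 2 * (\<Sum>i\<in>UNIV. \<Sum>j\<in>UNIV. D i j)"
    unfolding square by (simp add: sum_subtractf sum_distrib_left)
  ultimately show ?thesis
    unfolding quadratic_form_pair_sum_matrix by simp
qed

lemma positive_definite_if_quadratic_form_ge:
  fixes A :: "real^'n^'n"
  assumes "transpose A = A" "d > 0" "\<And>x. x \<bullet> (A *v x) \<ge> d * (x \<bullet> x)"
  shows "positive_definite A"
  unfolding positive_definite_def
proof (intro conjI allI impI assms(1))
  fix x :: "real^'n" assume "x \<noteq> 0"
  then have "0 < d * (x \<bullet> x)" using assms(2) by simp
  then show "x \<bullet> (A *v x) > 0" using assms(3)[of x] by linarith
qed

lemma positive_definite_pair_sum_matrix:
  assumes "d > 0"
  shows "positive_definite (pair_sum_matrix c d)"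
  by (rule positive_definite_if_quadratic_form_ge[OF transpose_pair_sum_matrix assms])
    (auto simp: quadratic_form_pair_sum_matrix intro!: add_nonneg_nonneg sum_nonneg)

lemma positive_definite_graph_part_pair_sum_matrix:
  assumes "undirected_graph E" "d > 0"
    and "\<And>i j. i \<noteq> j \<Longrightarrow> \<not> E i j \<Longrightarrow> c i j = 1 \<and> c j i = 1"
  shows "positive_definite (graph_part E (pair_sum_matrix c d))"
  by (rule positive_definite_if_quadratic_form_ge
      [OF transpose_graph_part[OF assms(1) transpose_pair_sum_matrix] assms(2)])
    (auto simp: quadratic_form_graph_part_pair_sum_matrix[OF assms(3)] intro!: add_nonneg_nonneg sum_nonneg)

lemma pair_sum_matrix_pos:
  assumes "\<And>i j. c i j \<ge> 0" "d \<ge> 0"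
  shows "pair_sum_matrix c d $ i $ j > 0"
proof -
  have "(\<Sum>k\<in>UNIV - {l}. (c l k)^2) \<ge> 0" for l by (intro sum_nonneg) simp
  then show ?thesis using assms by (simp add: pair_sum_matrix_def add_pos_nonneg)
qed

lemma pair_sum_matrix_row_excess:
  assumes "\<And>i j. c i j \<ge> 0" "d \<ge> 0"
  shows "(\<Sum>j\<in>UNIV - {i}. \<bar>pair_sum_matrix c d $ i $ j\<bar>) - \<bar>pair_sum_matrix c d $ i $ i\<bar>
       = (\<Sum>j\<in>UNIV - {i}. 1 + c i j * c j i - (c i j)^2) - (1 + d)"
proof -
  have pos: "pair_sum_matrix c d $ k $ l > 0" for k l
    using assms by (rule pair_sum_matrix_pos)
  have "(\<Sum>j\<in>UNIV - {i}. \<bar>pair_sum_matrix c d $ i $ j\<bar>) = (\<Sum>j\<in>UNIV - {i}. 1 + c i j * c j i)"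
  proof (intro sum.cong)
    fix j assume "j \<in> UNIV - {i}"
    then show "\<bar>pair_sum_matrix c d $ i $ j\<bar> = 1 + c i j * c j i"
      using pos[of i j] by (simp add: pair_sum_matrix_def)
  qed simp
  moreover have "\<bar>pair_sum_matrix c d $ i $ i\<bar> = 1 + d + (\<Sum>j\<in>UNIV - {i}. (c i j)^2)"
    using pos[of i i] by (simp add: pair_sum_matrix_def)
  ultimately show ?thesis by (simp add: sum_subtractf sum.distrib)
qed

definition neighbours :: "('n \<Rightarrow> 'n \<Rightarrow> bool) \<Rightarrow> 'n \<Rightarrow> 'n set" where
  "neighbours E v = {j. j \<noteq> v \<and> E v j}"

definition hub_weights :: "('n \<Rightarrow> 'n \<Rightarrow> bool) \<Rightarrow> 'n \<Rightarrow> real \<Rightarrow> real \<Rightarrow> 'n \<Rightarrow> 'n \<Rightarrow> real" where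
  "hub_weights E v a b i j =
     (if i = v \<and> j \<in> neighbours E v then a else if j = v \<and> i \<in> neighbours E v then b else 1)"

lemma hub_weights_nonneg: "a \<ge> 0 \<Longrightarrow> b \<ge> 0 \<Longrightarrow> hub_weights E v a b i j \<ge> 0"
  by (simp add: hub_weights_def)

lemma hub_weights_non_edge:
  assumes "undirected_graph E" "i \<noteq> j" "\<not> E i j"
  shows "hub_weights E v a b i j = 1 \<and> hub_weights E v a b j i = 1"
  using assms by (auto simp: hub_weights_def neighbours_def undirected_graph_def)

lemma sum_one_plus_indicator:
  fixes S :: "'n::finite set"
  assumes "S \<subseteq> UNIV - {i}"
  shows "(\<Sum>j\<in>UNIV - {i}. 1 + (if j \<in> S then t else 0)) = real CARD('n) - 1 + t * real (card S)"
proof -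
  have "(\<Sum>j\<in>UNIV - {i}. if j \<in> S then t else 0) = t * real (card S)"
    using assms by (simp add: sum.If_cases Int_absorb1)
  then show ?thesis by (simp add: sum.distrib card_Diff_singleton of_nat_diff)
qed

lemma hub_weights_row_excess_at_hub:
  fixes E :: "'n::finite \<Rightarrow> 'n \<Rightarrow> bool" and v :: 'n and a b :: real
  defines "c \<equiv> hub_weights E v a b"
  shows "(\<Sum>j\<in>UNIV - {v}. 1 + c v j * c j v - (c v j)^2)
       = real CARD('n) - 1 + (a * b - a^2) * real (card (neighbours E v))"
proof -
  have "(\<Sum>j\<in>UNIV - {v}. 1 + c v j * c j v - (c v j)^2)
      = (\<Sum>j\<in>UNIV - {v}. 1 + (if j \<in> neighbours E v then a * b - a^2 else 0))"
    by (intro sum.cong) (auto simp: c_def hub_weights_def neighbours_def power2_eq_square)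
  also have "\<dots> = real CARD('n) - 1 + (a * b - a^2) * real (card (neighbours E v))"
    by (rule sum_one_plus_indicator) (auto simp: neighbours_def)
  finally show ?thesis .
qed

lemma hub_weights_row_excess_off_hub:
  fixes E :: "'n::finite \<Rightarrow> 'n \<Rightarrow> bool" and v :: 'n and a b :: real
  defines "c \<equiv> hub_weights E v a b"
  assumes "i \<noteq> v"
  shows "(\<Sum>j\<in>UNIV - {i}. 1 + c i j * c j i - (c i j)^2)
       = real CARD('n) - 1 + (if i \<in> neighbours E v then a * b - b^2 else 0)"
proof -
  have "(\<Sum>j\<in>UNIV - {i}. 1 + c i j * c j i - (c i j)^2)
      = (\<Sum>j\<in>UNIV - {i}. 1 + (if j \<in> {v} then (if i \<in> neighbours E v then a * b - b^2 else 0) else 0))"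
    using assms by (intro sum.cong) (auto simp: c_def hub_weights_def neighbours_def power2_eq_square)
  also have "\<dots> = real CARD('n) - 1 + (if i \<in> neighbours E v then a * b - b^2 else 0) * real (card {v})"
    using assms by (intro sum_one_plus_indicator) auto
  finally show ?thesis by simp
qed

lemma graph_part_hub_row:
  fixes E :: "'n::finite \<Rightarrow> 'n \<Rightarrow> bool" and v :: 'n and a b d :: real
  defines "G \<equiv> graph_part E (pair_sum_matrix (hub_weights E v a b) d)"
    and "K \<equiv> real (card (neighbours E v))"
  assumes "a \<ge> 0" "b \<ge> 0"
  shows "(\<Sum>j\<in>UNIV - {v}. \<bar>G $ v $ j\<bar>) = (1 + a * b) * K"
    and "G $ v $ v = 1 + d + real CARD('n) - 1 + (a^2 - 1) * K"
proof -
  have "(\<Sum>j\<in>UNIV - {v}. \<bar>G $ v $ j\<bar>) = (\<Sum>j\<in>UNIV - {v}. if j \<in> neighbours E v then 1 + a * b else 0)"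
    using assms by (intro sum.cong) (auto simp: G_def graph_part_def pair_sum_matrix_def hub_weights_def neighbours_def)
  also have "\<dots> = (1 + a * b) * K"
  proof -
    have "(UNIV - {v}) \<inter> neighbours E v = neighbours E v" by (auto simp: neighbours_def)
    then show ?thesis by (simp add: K_def sum.If_cases)
  qed
  finally show "(\<Sum>j\<in>UNIV - {v}. \<bar>G $ v $ j\<bar>) = (1 + a * b) * K" .
  have "(\<Sum>j\<in>UNIV - {v}. (hub_weights E v a b v j)^2)
      = (\<Sum>j\<in>UNIV - {v}. 1 + (if j \<in> neighbours E v then a^2 - 1 else 0))"
    by (intro sum.cong) (auto simp: hub_weights_def neighbours_def)
  also have "\<dots> = real CARD('n) - 1 + (a^2 - 1) * K"
    unfolding K_def by (rule sum_one_plus_indicator) (auto simp: neighbours_def)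
  finally show "G $ v $ v = 1 + d + real CARD('n) - 1 + (a^2 - 1) * K"
    by (simp add: G_def graph_part_def pair_sum_matrix_def)
qed

lemma exists_vertex_with_two_neighbours:
  fixes E :: "'n::finite \<Rightarrow> 'n \<Rightarrow> bool"
  assumes "CARD('n) \<ge> 3" "undirected_graph E" "graph_connected E"
  shows "\<exists>v. card (neighbours E v) \<ge> 2"
proof (rule ccontr)
  assume "\<not> ?thesis"
  then have at_most_one: "card (neighbours E w) \<le> Suc 0" for w
    by (simp add: not_le numeral_2_eq_2 less_Suc_eq_le)
  fix u :: 'n
  define C where "C = insert u (neighbours E u)"
  have "card C \<le> 2"
    unfolding C_def using card_insert_le_m1[of 2 "neighbours E u"] at_most_one[of u] by simp
  have closed: "y \<in> C" if "x \<in> C" "E x y" for x y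
  proof (cases "x = u \<or> y = x")
    case True then show ?thesis using that by (auto simp: C_def neighbours_def)
  next
    case False
    then have "x \<in> neighbours E u" "y \<in> neighbours E x" using that by (auto simp: C_def neighbours_def)
    moreover have "u \<in> neighbours E x"
      using assms(2) \<open>x \<in> neighbours E u\<close> by (auto simp: undirected_graph_def neighbours_def)
    ultimately have "y = u"
      using at_most_one[of x] by (auto simp: card_le_Suc0_iff_eq)
    then show ?thesis by (simp add: C_def)
  qed
  have "z \<in> C" for z
  proof -
    have "E\<^sup>*\<^sup>* u z" using assms(3) by (simp add: graph_connected_def)
    then show ?thesis
      by (induction rule: rtranclp_induct) (simp add: C_def, blast intro: closed)
  qed
  then have "C = UNIV" by blast
  then show False using \<open>card C \<le> 2\<close> assms(1) by simp
qed

text \<open>With b = a + 1/2 one gets a b - a^2 = a/2 and a b - b^2 = -b/2: every row of the matrix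
  stays non-dominant, while in the hub row of the graph part the entries 1 + a b of the at least
  two neighbours outweigh the diagonal.\<close>
definition hub_matrix :: "('n::finite \<Rightarrow> 'n \<Rightarrow> bool) \<Rightarrow> 'n \<Rightarrow> real^'n^'n" where
  "hub_matrix E v =
     pair_sum_matrix (hub_weights E v (real CARD('n) - 3) (real CARD('n) - 5/2)) (1/2)"

lemma hub_matrix_pos:
  fixes E :: "'n::finite \<Rightarrow> 'n \<Rightarrow> bool"
  assumes "CARD('n) \<ge> 3"
  shows "hub_matrix E v $ i $ j > 0"
  using assms by (auto simp: hub_matrix_def intro!: pair_sum_matrix_pos hub_weights_nonneg)

lemma hub_matrix_rows_not_dominant:
  fixes E :: "'n::finite \<Rightarrow> 'n \<Rightarrow> bool"
  assumes "CARD('n) \<ge> 3"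
  shows "\<bar>hub_matrix E v $ i $ i\<bar> < (\<Sum>j\<in>UNIV - {i}. \<bar>hub_matrix E v $ i $ j\<bar>)"
proof -
  define N where "N = real CARD('n)"
  define c where "c = hub_weights E v (N - 3) (N - 5/2)"
  have "N \<ge> 3" using assms by (simp add: N_def)
  have "(\<Sum>j\<in>UNIV - {i}. 1 + c i j * c j i - (c i j)^2) > 3/2"
  proof (cases "i = v")
    case True
    define K where "K = real (card (neighbours E v))"
    have "(\<Sum>j\<in>UNIV - {i}. 1 + c i j * c j i - (c i j)^2) = N - 1 + (N - 3) / 2 * K"
      unfolding True c_def N_def K_def hub_weights_row_excess_at_hub
      by (simp add: power2_eq_square field_simps)
    moreover have "(N - 3) / 2 * K \<ge> 0" using \<open>N \<ge> 3\<close> by (simp add: K_def)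
    ultimately show ?thesis using \<open>N \<ge> 3\<close> by linarith
  next
    case False
    have "(\<Sum>j\<in>UNIV - {i}. 1 + c i j * c j i - (c i j)^2)
        = N - 1 - (if i \<in> neighbours E v then (N - 5/2) / 2 else 0)"
      unfolding c_def N_def hub_weights_row_excess_off_hub[OF False]
      by (simp add: power2_eq_square field_simps)
    then show ?thesis using \<open>N \<ge> 3\<close> by (cases "i \<in> neighbours E v") (auto simp: field_simps)
  qed
  moreover have "c i j \<ge> 0" for i j
    using \<open>N \<ge> 3\<close> by (simp add: c_def hub_weights_nonneg)
  ultimately show ?thesis
    using pair_sum_matrix_row_excess[of c "1/2" i] by (simp add: hub_matrix_def c_def N_def)
qed

lemma not_strictly_diag_dominant_graph_part_hub_matrix:
  fixes E :: "'n::finite \<Rightarrow> 'n \<Rightarrow> bool"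
  assumes "CARD('n) \<ge> 3" "card (neighbours E v) \<ge> 2"
  shows "\<not> strictly_diag_dominant (graph_part E (hub_matrix E v))"
proof -
  define N where "N = real CARD('n)"
  define K where "K = real (card (neighbours E v))"
  define G where "G = graph_part E (hub_matrix E v)"
  have "N \<ge> 3" "K \<ge> 2" using assms by (simp_all add: N_def K_def)
  have off: "(\<Sum>j\<in>UNIV - {v}. \<bar>G $ v $ j\<bar>) = (1 + (N - 3) * (N - 5/2)) * K"
   and diag: "G $ v $ v = 1 + 1/2 + N - 1 + ((N - 3)^2 - 1) * K"
    using graph_part_hub_row[of "N - 3" "N - 5/2" E v "1/2"] \<open>N \<ge> 3\<close>
    by (simp_all add: G_def K_def N_def hub_matrix_def)
  have "(1 + (N - 3) * (N - 5/2)) * K - ((N - 3)^2 - 1) * K = K * (N + 1) / 2"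
    by (simp add: power2_eq_square field_simps)
  moreover have "2 * (N + 1) \<le> K * (N + 1)"
    using \<open>K \<ge> 2\<close> \<open>N \<ge> 3\<close> by (intro mult_right_mono) auto
  moreover have "G $ v $ v > 0"
    using hub_matrix_pos[OF assms(1)] by (simp add: G_def graph_part_def)
  ultimately have "\<bar>G $ v $ v\<bar> \<le> (\<Sum>j\<in>UNIV - {v}. \<bar>G $ v $ j\<bar>)"
    using off diag by simp
  then show ?thesis
    by (auto simp: strictly_diag_dominant_def G_def not_less)
qed

theorem proposition1:
  fixes E :: "'n::finite \<Rightarrow> 'n \<Rightarrow> bool"
  assumes "CARD('n) \<ge> 3"
    and "undirected_graph E"
    and "graph_connected E"
  shows "\<exists>A :: real^'n^'n.
           transpose A = A \<and>
           positive_definite A \<and>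
           (\<forall>i j. A $ i $ j \<noteq> 0) \<and>
           (\<forall>i. \<bar>A $ i $ i\<bar> < (\<Sum>j\<in>UNIV - {i}. \<bar>A $ i $ j\<bar>)) \<and>
           positive_definite (graph_part E A) \<and>
           \<not> strictly_diag_dominant (graph_part E A)"
proof -
  obtain v where v: "card (neighbours E v) \<ge> 2"
    using exists_vertex_with_two_neighbours[OF assms] ..
  have "transpose (hub_matrix E v) = hub_matrix E v" "positive_definite (hub_matrix E v)"
    by (simp_all add: hub_matrix_def transpose_pair_sum_matrix positive_definite_pair_sum_matrix)
  moreover have "hub_matrix E v $ i $ j \<noteq> 0" for i j
    using hub_matrix_pos[OF assms(1)] by (metis less_irrefl)
  moreover have "positive_definite (graph_part E (hub_matrix E v))"
    unfolding hub_matrix_def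
    by (rule positive_definite_graph_part_pair_sum_matrix[OF assms(2)])
      (auto dest: hub_weights_non_edge[OF assms(2)])
  ultimately show ?thesis
    using hub_matrix_rows_not_dominant[OF assms(1)]
      not_strictly_diag_dominant_graph_part_hub_matrix[OF assms(1) v]
    by blast
qed

end
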